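(* Let $M$ be a simple triangular grid graph and let $g,g'$ be nodes of $M$. For $q\in\{x,y,z\}$ let $d_q:=d_{M,q}(g,g')$ and $$P_q:=\{v\in M : d_{M,q}(g,v)=\lceil d_q/2\rceil \text{ and } d_{M,q}(g',v)=\lfloor d_q/2\rfloor\}.$$ Then for each $q\in\{x,y,z\}$, $P_q$ is a $q$-portal of $M$, and every $gg'$-path in $M$ contains a node of $P_q$.
   Context: $G_\Delta$ is the infinite regular triangular grid graph; its edges are parallel to three axes: the $x$-axis (East–West), the $y$-axis (NNE–SSW) and the $z$-axis (NNW–SSE). A triangular grid graph is the subgraph of $G_\Delta$ induced by a finite node set such that it is connected; it is simple if the subgraph of $G_\Delta$ induced by the complement of its node set is connected (i.e. no inner holes). For a triangular grid graph $\Gamma=(V_\Gamma,E_\Gamma)$ and $E_x\subseteq E_\Gamma$ the edges parallel to the $x$-axis, the $x$-portals of $\Gamma$ are the connected components of $(V_\Gamma,E_x)$; $y$- and $z$-portals are defined analogously. $\operatorname{portal}_q(u)$ denotes the $q$-portal containing $u$. The $q$-portal graph $\mathcal P_q$ has a node for each $q$-portal, two portals being adjacent iff some edge of $\Gamma$ joins them. The $q$-distance $d_{\Gamma,q}(u,v)$ is the distance between $\operatorname{portal}_q(u)$ and $\operatorname{portal}_q(v)$ in $\mathcal P_q$. *)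

theory Defs
  imports Main
begin

text \<open>Nodes of the infinite triangular grid: axial coordinates (a,b) standing for the
point a*e1 + b*e2 with e1 = (1,0) (East) and e2 = (1/2, sqrt 3/2) (NNE).
x-axis edges: (a,b)--(a+1,b); y-axis edges: (a,b)--(a,b+1);
z-axis edges: (a,b)--(a-1,b+1) (NNW-SSE).\<close>

type_synonym node = "int \<times> int"

datatype axis = AX | AY | AZ

fun axis_adj :: "axis \<Rightarrow> node \<Rightarrow> node \<Rightarrow> bool" where
  "axis_adj AX (a,b) (c,d) \<longleftrightarrow> d = b \<and> \<bar>c - a\<bar> = 1"
| "axis_adj AY (a,b) (c,d) \<longleftrightarrow> c = a \<and> \<bar>d - b\<bar> = 1"
| "axis_adj AZ (a,b) (c,d) \<longleftrightarrow> (c = a - 1 \<and> d = b + 1) \<or> (c = a + 1 \<and> d = b - 1)"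

definition grid_adj :: "node \<Rightarrow> node \<Rightarrow> bool" where
  "grid_adj u v \<longleftrightarrow> (\<exists>q. axis_adj q u v)"

definition induced_connected :: "node set \<Rightarrow> bool" where
  "induced_connected S \<longleftrightarrow>
     (\<forall>u\<in>S. \<forall>v\<in>S. (\<lambda>a b. a \<in> S \<and> b \<in> S \<and> grid_adj a b)\<^sup>*\<^sup>* u v)"

definition tri_grid_graph :: "node set \<Rightarrow> bool" where
  "tri_grid_graph V \<longleftrightarrow> finite V \<and> V \<noteq> {} \<and> induced_connected V"

definition simple_tri_grid_graph :: "node set \<Rightarrow> bool" where
  "simple_tri_grid_graph V \<longleftrightarrow> tri_grid_graph V \<and> induced_connected (- V)"

definition portal :: "axis \<Rightarrow> node set \<Rightarrow> node \<Rightarrow> node set" where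
  "portal q V u = {v. (\<lambda>a b. a \<in> V \<and> b \<in> V \<and> axis_adj q a b)\<^sup>*\<^sup>* u v \<and> v \<in> V}"

definition is_portal :: "axis \<Rightarrow> node set \<Rightarrow> node set \<Rightarrow> bool" where
  "is_portal q V P \<longleftrightarrow> (\<exists>u\<in>V. P = portal q V u)"

definition portal_adj :: "axis \<Rightarrow> node set \<Rightarrow> node set \<Rightarrow> node set \<Rightarrow> bool" where
  "portal_adj q V P Q \<longleftrightarrow> is_portal q V P \<and> is_portal q V Q \<and> P \<noteq> Q \<and>
     (\<exists>a\<in>P. \<exists>b\<in>Q. grid_adj a b)"

definition qdist :: "axis \<Rightarrow> node set \<Rightarrow> node \<Rightarrow> node \<Rightarrow> nat" where
  "qdist q V u v = (LEAST n. (portal_adj q V ^^ n) (portal q V u) (portal q V v))"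

definition grid_path :: "node set \<Rightarrow> node \<Rightarrow> node \<Rightarrow> node list \<Rightarrow> bool" where
  "grid_path V u v p \<longleftrightarrow> p \<noteq> [] \<and> hd p = u \<and> last p = v \<and> set p \<subseteq> V \<and>
     (\<forall>i. Suc i < length p \<longrightarrow> grid_adj (p ! i) (p ! Suc i))"

end

(* Portals of a simple grid graph M separate their neighbours: two nodes of M adjacent to a
   q-portal Z but lying in different q-portals cannot be joined by a path in M - Z. After a
   reflection or shear of the grid taking q to x, Z is a horizontal segment whose two end
   neighbours are free (not in M). Since the complement of M is connected, a path of free nodes
   joins the ends of the segment (or one end to a gap next to a neighbouring portal); closed up
   along the segment it becomes a closed walk whose crossing parity with a horizontal ray differs
   at the two neighbours, while it cannot change along a path avoiding the walk.
   Hence in the q-portal graph every inner portal of a shortest walk from portal(g) to portal(g')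
   separates its ends. So every portal at distance ceil(d/2) from portal(g) and floor(d/2) from
   portal(g') is the middle portal of a fixed shortest walk, and that portal meets every path
   from g to g'. *)

theory Submission
  imports Defs
begin

section \<open>Parity of steps along a walk\<close>

lemma successively_append_tl:
  assumes "successively P xs" "successively P ys" "xs \<noteq> []" "hd ys = last xs"
  shows "successively P (xs @ tl ys)"
  using assms by (cases ys) (auto simp: successively_append_iff successively_Cons)

lemma last_append_tl:
  "xs \<noteq> [] \<Longrightarrow> ys \<noteq> [] \<Longrightarrow> hd ys = last xs \<Longrightarrow> last (xs @ tl ys) = last ys"
  by (cases ys) auto

lemma successively_upto: "successively (\<lambda>x y. y = x + 1) [i..(j::int)]"
  by (auto simp: successively_conv_nth)

fun odd_steps :: "('a \<Rightarrow> 'a \<Rightarrow> bool) \<Rightarrow> 'a list \<Rightarrow> bool" where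
  "odd_steps E (a # b # xs) = (E a b \<noteq> odd_steps E (b # xs))"
| "odd_steps E _ = False"

lemma odd_steps_xor:
  "odd_steps (\<lambda>a b. E a b \<noteq> E' a b) xs = (odd_steps E xs \<noteq> odd_steps E' xs)"
  by (induction E xs rule: odd_steps.induct) auto

lemma odd_steps_boundary:
  "xs \<noteq> [] \<Longrightarrow> odd_steps (\<lambda>a b. (a \<in> X) \<noteq> (b \<in> X)) xs = ((hd xs \<in> X) \<noteq> (last xs \<in> X))"
  by (induction "\<lambda>a b. (a \<in> X) \<noteq> (b \<in> X)" xs rule: odd_steps.induct) auto

lemma odd_steps_cong:
  "successively P xs \<Longrightarrow> (\<And>a b. P a b \<Longrightarrow> E a b = E' a b) \<Longrightarrow> odd_steps E xs = odd_steps E' xs"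
  by (induction E xs rule: odd_steps.induct) auto

lemma odd_steps_False: "successively (\<lambda>a b. \<not> E a b) xs \<Longrightarrow> \<not> odd_steps E xs"
  by (induction E xs rule: odd_steps.induct) auto

lemma odd_steps_append_tl:
  "xs \<noteq> [] \<Longrightarrow> hd ys = last xs \<Longrightarrow> odd_steps E (xs @ tl ys) = (odd_steps E xs \<noteq> odd_steps E ys)"
proof (induction E xs rule: odd_steps.induct)
  case ("2_2" E v)
  then show ?case by (cases ys; cases "tl ys") auto
qed auto

section \<open>Grid connectivity and portals\<close>

lemma abs_eq_1_iff: "\<bar>x :: int\<bar> = 1 \<longleftrightarrow> x = 1 \<or> x = -1"
  by arith

lemma grid_adj_iff:
  "grid_adj (a, b) (c, d) \<longleftrightarrow>
    (d = b \<and> (c = a + 1 \<or> c = a - 1)) \<or> (c = a \<and> (d = b + 1 \<or> d = b - 1)) \<or>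
    (c = a - 1 \<and> d = b + 1) \<or> (c = a + 1 \<and> d = b - 1)"
proof -
  have "grid_adj u v \<longleftrightarrow> axis_adj AX u v \<or> axis_adj AY u v \<or> axis_adj AZ u v" for u v
    unfolding grid_adj_def by (metis axis.exhaust)
  then show ?thesis by (auto simp: abs_eq_1_iff)
qed

lemma grid_adj_sym: "grid_adj u v \<Longrightarrow> grid_adj v u"
  by (cases u; cases v) (auto simp: grid_adj_iff)

lemma axis_adj_imp_grid_adj: "axis_adj q u v \<Longrightarrow> grid_adj u v"
  unfolding grid_adj_def by blast

definition grid_reach :: "node set \<Rightarrow> node \<Rightarrow> node \<Rightarrow> bool" where
  "grid_reach S = (\<lambda>a b. a \<in> S \<and> b \<in> S \<and> grid_adj a b)\<^sup>*\<^sup>*"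

lemma induced_connected_iff: "induced_connected S \<longleftrightarrow> (\<forall>u\<in>S. \<forall>v\<in>S. grid_reach S u v)"
  unfolding induced_connected_def grid_reach_def ..

lemma grid_reach_step: "u \<in> S \<Longrightarrow> v \<in> S \<Longrightarrow> grid_adj u v \<Longrightarrow> grid_reach S u v"
  unfolding grid_reach_def by auto

lemma grid_reach_trans: "grid_reach S u v \<Longrightarrow> grid_reach S v w \<Longrightarrow> grid_reach S u w"
  unfolding grid_reach_def by auto

lemma grid_reach_mono: "grid_reach S u v \<Longrightarrow> S \<subseteq> T \<Longrightarrow> grid_reach T u v"
  unfolding grid_reach_def by (erule rtranclp_mono[THEN predicate2D, rotated]) auto

lemma grid_reach_sym: assumes "grid_reach S u v" shows "grid_reach S v u"
proof -
  have "symp (\<lambda>a b. a \<in> S \<and> b \<in> S \<and> grid_adj a b)"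
    unfolding symp_def using grid_adj_sym by blast
  then have "symp (grid_reach S)" unfolding grid_reach_def by (rule symp_rtranclp)
  then show ?thesis using assms by (rule sympD)
qed

lemma grid_reach_walk:
  assumes "grid_reach S u v" "u \<in> S"
  shows "\<exists>\<sigma>. \<sigma> \<noteq> [] \<and> hd \<sigma> = u \<and> last \<sigma> = v \<and> successively grid_adj \<sigma> \<and> set \<sigma> \<subseteq> S"
  using assms(1) unfolding grid_reach_def
proof (induction rule: rtranclp_induct)
  case base
  then show ?case using assms(2) by (intro exI[of _ "[u]"]) auto
next
  case (step y z)
  then obtain \<sigma> where "\<sigma> \<noteq> []" "hd \<sigma> = u" "last \<sigma> = y" "successively grid_adj \<sigma>" "set \<sigma> \<subseteq> S"
    by blast
  with step.hyps(2) show ?case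
    by (intro exI[of _ "\<sigma> @ [z]"]) (auto simp: successively_append_iff)
qed

lemma walk_grid_reach:
  "successively grid_adj \<sigma> \<Longrightarrow> set \<sigma> \<subseteq> S \<Longrightarrow> \<sigma> \<noteq> [] \<Longrightarrow> grid_reach S (hd \<sigma>) (last \<sigma>)"
proof (induction \<sigma>)
  case (Cons a \<sigma>)
  then show ?case
    by (cases \<sigma>) (auto simp: grid_reach_def intro: converse_rtranclp_into_rtranclp)
qed simp

lemma grid_reach_image:
  assumes "\<And>u v. grid_adj (f u) (f v) \<longleftrightarrow> grid_adj u v" "grid_reach S u v"
  shows "grid_reach (f ` S) (f u) (f v)"
  using assms(2) unfolding grid_reach_def
  by (induction rule: rtranclp_induct) (auto simp: assms(1) intro: rtranclp.rtrancl_into_rtrancl)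

lemma portal_subset: "portal q M u \<subseteq> M"
  unfolding portal_def by auto

lemma portal_self: "u \<in> M \<Longrightarrow> u \<in> portal q M u"
  unfolding portal_def by simp

lemma axis_adj_sym: "axis_adj q a b \<Longrightarrow> axis_adj q b a"
  by (cases q; cases a; cases b) auto

lemma portal_eq: assumes "v \<in> portal q M u" shows "portal q M v = portal q M u"
proof -
  let ?R = "\<lambda>a b. a \<in> M \<and> b \<in> M \<and> axis_adj q a b"
  have "symp ?R" unfolding symp_def using axis_adj_sym by blast
  then have sym: "symp ?R\<^sup>*\<^sup>*" by (rule symp_rtranclp)
  have uv: "?R\<^sup>*\<^sup>* u v" using assms unfolding portal_def by simp
  have "?R\<^sup>*\<^sup>* v w \<longleftrightarrow> ?R\<^sup>*\<^sup>* u w" for w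
    using rtranclp_trans[OF uv] rtranclp_trans[OF sympD[OF sym uv]] by blast
  then show ?thesis unfolding portal_def by simp
qed

lemma is_portal_portal: "u \<in> M \<Longrightarrow> is_portal q M (portal q M u)"
  unfolding is_portal_def by blast

lemma is_portal_subset: "is_portal q M Z \<Longrightarrow> Z \<subseteq> M"
  unfolding is_portal_def using portal_subset by blast

lemma is_portal_eq: "is_portal q M Z \<Longrightarrow> u \<in> Z \<Longrightarrow> portal q M u = Z"
  unfolding is_portal_def using portal_eq by blast

lemma is_portal_disjoint: "is_portal q M X \<Longrightarrow> is_portal q M Y \<Longrightarrow> X \<noteq> Y \<Longrightarrow> X \<inter> Y = {}"
  using is_portal_eq by blast

lemma grid_reach_portal: "v \<in> portal q M u \<Longrightarrow> grid_reach (portal q M u) u v"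
proof -
  let ?R = "\<lambda>a b. a \<in> M \<and> b \<in> M \<and> axis_adj q a b"
  assume "v \<in> portal q M u"
  then have "?R\<^sup>*\<^sup>* u v" unfolding portal_def by simp
  then show ?thesis
  proof (induction rule: rtranclp_induct)
    case (step y z)
    then have "y \<in> portal q M u" "z \<in> portal q M u"
      unfolding portal_def by (auto intro: rtranclp.rtrancl_into_rtrancl)
    with step show ?case
      by (meson axis_adj_imp_grid_adj grid_reach_step grid_reach_trans)
  qed (simp add: grid_reach_def)
qed

lemma grid_reach_is_portal: "is_portal q M Z \<Longrightarrow> u \<in> Z \<Longrightarrow> v \<in> Z \<Longrightarrow> grid_reach Z u v"
  by (metis grid_reach_portal is_portal_eq)

lemma portal_image:
  assumes inv: "\<And>v. f (f v) = v" and ax: "\<And>u v. axis_adj q' (f u) (f v) \<longleftrightarrow> axis_adj q u v"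
  shows "portal q' (f ` M) (f u) = f ` portal q M u"
proof -
  let ?R = "\<lambda>a b. a \<in> M \<and> b \<in> M \<and> axis_adj q a b"
  let ?R' = "\<lambda>a b. a \<in> f ` M \<and> b \<in> f ` M \<and> axis_adj q' a b"
  have mem: "x \<in> f ` A \<longleftrightarrow> f x \<in> A" for x A by (metis image_iff inv)
  have fwd: "?R'\<^sup>*\<^sup>* (f a) (f b)" if "?R\<^sup>*\<^sup>* a b" for a b
    using that
  proof (induction rule: rtranclp_induct)
    case (step y z)
    then have "?R' (f y) (f z)" by (simp add: mem inv ax)
    with step.IH show ?case by (rule rtranclp.rtrancl_into_rtrancl)
  qed simp
  have bwd: "?R\<^sup>*\<^sup>* (f a) (f b)" if "?R'\<^sup>*\<^sup>* a b" for a b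
    using that
  proof (induction rule: rtranclp_induct)
    case (step y z)
    then have "?R (f y) (f z)" using ax[of "f y" "f z"] by (simp add: mem inv)
    with step.IH show ?case by (rule rtranclp.rtrancl_into_rtrancl)
  qed simp
  have "x \<in> portal q' (f ` M) (f u) \<longleftrightarrow> x \<in> f ` portal q M u" for x
    using fwd[of u "f x"] bwd[of "f u" x] unfolding portal_def mem by (auto simp: inv)
  then show ?thesis by blast
qed

lemma portal_AX_row:
  assumes "v \<in> portal AX M (a, b)"
  shows "snd v = b \<and> {min a (fst v)..max a (fst v)} \<times> {b} \<subseteq> M"
proof -
  let ?R = "\<lambda>u v. u \<in> M \<and> v \<in> M \<and> axis_adj AX u v"
  have "?R\<^sup>*\<^sup>* (a, b) v" "v \<in> M" using assms unfolding portal_def by auto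
  then show ?thesis
  proof (induction rule: rtranclp_induct)
    case (step y z)
    obtain y1 y2 z1 z2 where yz: "y = (y1, y2)" "z = (z1, z2)" by fastforce
    with step.hyps(2) have "z2 = y2" "z1 = y1 + 1 \<or> z1 = y1 - 1" by (auto simp: abs_eq_1_iff)
    moreover have "y2 = b" "{min a y1..max a y1} \<times> {b} \<subseteq> M"
      using step.IH step.hyps(2) yz by auto
    moreover have "{min a z1..max a z1} \<subseteq> insert z1 {min a y1..max a y1}"
      using \<open>z1 = y1 + 1 \<or> z1 = y1 - 1\<close> by auto
    ultimately show ?case using step.prems yz by auto
  qed auto
qed

lemma portal_AX_segment:
  assumes "{min a x..max a x} \<times> {b} \<subseteq> M"
  shows "(x, b) \<in> portal AX M (a, b)"
proof -
  let ?R = "\<lambda>u v. u \<in> M \<and> v \<in> M \<and> axis_adj AX u v"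
  have along: "?R\<^sup>*\<^sup>* (y, b) (y', b)" if "y \<le> y'" "{y..y'} \<times> {b} \<subseteq> M" for y y'
    using that
  proof (induction y' rule: int_ge_induct)
    case (step i)
    have "{y..i} \<times> {b} \<subseteq> {y..i + 1} \<times> {b}" by auto
    with step have "?R\<^sup>*\<^sup>* (y, b) (i, b)" "?R (i, b) (i + 1, b)" by auto
    then show ?case by (rule rtranclp.rtrancl_into_rtrancl)
  qed simp
  have xM: "(x, b) \<in> M" using assms by auto
  show ?thesis
  proof (cases "a \<le> x")
    case True
    with assms have "?R\<^sup>*\<^sup>* (a, b) (x, b)" by (intro along) auto
    with xM show ?thesis unfolding portal_def by simp
  next
    case False
    with assms have "?R\<^sup>*\<^sup>* (x, b) (a, b)" "(a, b) \<in> M" by (auto intro!: along)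
    then have "(a, b) \<in> portal AX M (x, b)" unfolding portal_def by simp
    then have "portal AX M (a, b) = portal AX M (x, b)" by (rule portal_eq)
    with portal_self[OF xM] show ?thesis by simp
  qed
qed

lemma grid_reach_row:
  assumes "{min x x'..max x x'} \<times> {b} \<subseteq> S"
  shows "grid_reach S (x, b) (x', b)"
  using grid_reach_portal[OF portal_AX_segment[OF assms]] portal_subset by (rule grid_reach_mono)

lemma portal_AX_interval:
  assumes "finite M" "(a, b) \<in> M"
  shows "\<exists>l h. l \<le> a \<and> a \<le> h \<and> portal AX M (a, b) = {l..h} \<times> {b} \<and>
    (l - 1, b) \<notin> M \<and> (h + 1, b) \<notin> M"
proof -
  let ?P = "portal AX M (a, b)"
  let ?C = "fst ` ?P"
  have fin: "finite ?C" using finite_subset[OF portal_subset assms(1)] by blast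
  have aC: "a \<in> ?C" using portal_self[OF assms(2)] by force
  define l h where "l = Min ?C" and "h = Max ?C"
  have bounds: "l \<le> y" "y \<le> h" if "y \<in> ?C" for y
    using fin that unfolding l_def h_def by auto
  have row: "snd v = b" "{min a (fst v)..max a (fst v)} \<times> {b} \<subseteq> M" if "v \<in> ?P" for v
    using portal_AX_row[OF that] by auto
  have ends: "(l, b) \<in> ?P" "(h, b) \<in> ?P"
  proof -
    obtain v w where "v \<in> ?P" "l = fst v" "w \<in> ?P" "h = fst w"
      using Min_in[OF fin] Max_in[OF fin] aC unfolding l_def h_def by blast
    with row(1) show "(l, b) \<in> ?P" "(h, b) \<in> ?P" by (metis prod.collapse)+
  qed
  have "min a l = l" "max a l = a" "min a h = a" "max a h = h"
    using bounds[OF aC] by auto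
  then have "{l..a} \<times> {b} \<subseteq> M" "{a..h} \<times> {b} \<subseteq> M"
    using row(2)[OF ends(1)] row(2)[OF ends(2)] by simp_all
  moreover have "{l..h} \<subseteq> {l..a} \<union> {a..h}" by auto
  ultimately have seg: "{l..h} \<times> {b} \<subseteq> M" by blast
  have in_P: "(y, b) \<in> ?P" if "l - 1 \<le> y" "y \<le> h + 1" "(y, b) \<in> M" for y
  proof (rule portal_AX_segment)
    have "{min a y..max a y} \<subseteq> insert y {l..h}"
      using that bounds[OF aC] by auto
    with seg that(3) show "{min a y..max a y} \<times> {b} \<subseteq> M" by blast
  qed
  have "?P = {l..h} \<times> {b}"
  proof
    show "?P \<subseteq> {l..h} \<times> {b}"
    proof
      fix v assume "v \<in> ?P"
      with row(1) bounds show "v \<in> {l..h} \<times> {b}" by (cases v) force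
    qed
    show "{l..h} \<times> {b} \<subseteq> ?P"
      using in_P seg by auto
  qed
  moreover have "(l - 1, b) \<notin> M" "(h + 1, b) \<notin> M"
  proof -
    have inside: "l \<le> y \<and> y \<le> h" if "l - 1 \<le> y" "y \<le> h + 1" "(y, b) \<in> M" for y
    proof -
      have "y \<in> ?C" using in_P[OF that] by (rule image_eqI[rotated]) simp
      then show ?thesis using bounds by blast
    qed
    show "(l - 1, b) \<notin> M" "(h + 1, b) \<notin> M"
      using inside[of "l - 1"] inside[of "h + 1"] bounds[OF aC] by auto
  qed
  ultimately show ?thesis using bounds[OF aC] by blast
qed

section \<open>Winding parity\<close>

(* The edge uv crosses the eastward ray from the centre of the upward triangle whose
   lower-left corner is p. *)
fun crosses_ray :: "node \<Rightarrow> node \<Rightarrow> node \<Rightarrow> bool" where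
  "crosses_ray (c, s) u v \<longleftrightarrow>
     (snd u = s \<and> c < fst u \<and> snd v = s + 1) \<or> (snd v = s \<and> c < fst v \<and> snd u = s + 1)"

definition winding_odd :: "node list \<Rightarrow> node \<Rightarrow> bool" where
  "winding_odd D p = odd_steps (crosses_ray p) D"

definition closed_walk :: "node list \<Rightarrow> bool" where
  "closed_walk D \<longleftrightarrow> D \<noteq> [] \<and> hd D = last D \<and> successively grid_adj D"

lemma crosses_ray_rows: "snd u = snd v \<Longrightarrow> \<not> crosses_ray p u v"
  by (cases p) simp

lemma crosses_ray_shift_x:
  "grid_adj a b \<Longrightarrow> a \<noteq> (c + 1, s) \<Longrightarrow> b \<noteq> (c + 1, s) \<Longrightarrow>
   crosses_ray (c, s) a b = crosses_ray (c + 1, s) a b"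
  by (cases a; cases b; simp only: grid_adj_iff; elim disjE conjE) auto

lemma crosses_ray_shift_y:
  "grid_adj a b \<Longrightarrow> a \<notin> {(c, s), (c, s + 1)} \<Longrightarrow> b \<notin> {(c, s), (c, s + 1)} \<Longrightarrow>
   (crosses_ray (c, s) a b \<noteq> crosses_ray (c, s + 1) a b) =
   ((a \<in> {c<..} \<times> {s + 1}) \<noteq> (b \<in> {c<..} \<times> {s + 1}))"
  by (cases a; cases b; simp only: grid_adj_iff; elim disjE conjE; cases "snd a = s";
    cases "snd a = s + 1"; cases "snd a = s - 1"; cases "snd a = s + 2"; auto)

lemma crosses_ray_shift_z:
  "grid_adj a b \<Longrightarrow> a \<notin> {(c, s), (c - 1, s + 1)} \<Longrightarrow> b \<notin> {(c, s), (c - 1, s + 1)} \<Longrightarrow>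
   (crosses_ray (c, s) a b \<noteq> crosses_ray (c - 1, s + 1) a b) =
   ((a \<in> {c..} \<times> {s + 1}) \<noteq> (b \<in> {c..} \<times> {s + 1}))"
  by (cases a; cases b; simp only: grid_adj_iff; elim disjE conjE; cases "snd a = s";
    cases "snd a = s + 1"; cases "snd a = s - 1"; cases "snd a = s + 2"; auto)

lemma successively_avoiding:
  "successively P xs \<Longrightarrow> set xs \<inter> S = {} \<Longrightarrow> successively (\<lambda>a b. P a b \<and> a \<notin> S \<and> b \<notin> S) xs"
  by (induction P xs rule: successively.induct) auto

lemma odd_steps_crosses_ray_diff:
  assumes "\<sigma> \<noteq> []" "successively grid_adj \<sigma>" "set \<sigma> \<inter> S = {}"
    and "\<And>a b. grid_adj a b \<Longrightarrow> a \<notin> S \<Longrightarrow> b \<notin> S \<Longrightarrow>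
      (crosses_ray p a b \<noteq> crosses_ray p' a b) = ((a \<in> X) \<noteq> (b \<in> X))"
  shows "(odd_steps (crosses_ray p) \<sigma> \<noteq> odd_steps (crosses_ray p') \<sigma>) = ((hd \<sigma> \<in> X) \<noteq> (last \<sigma> \<in> X))"
proof -
  have "(odd_steps (crosses_ray p) \<sigma> \<noteq> odd_steps (crosses_ray p') \<sigma>) =
      odd_steps (\<lambda>a b. crosses_ray p a b \<noteq> crosses_ray p' a b) \<sigma>"
    by (rule odd_steps_xor[symmetric])
  also have "\<dots> = odd_steps (\<lambda>a b. (a \<in> X) \<noteq> (b \<in> X)) \<sigma>"
    using successively_avoiding[OF assms(2,3)] by (rule odd_steps_cong) (use assms(4) in blast)
  also have "\<dots> = ((hd \<sigma> \<in> X) \<noteq> (last \<sigma> \<in> X))"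
    by (rule odd_steps_boundary[OF assms(1)])
  finally show ?thesis .
qed

lemma winding_odd_eq:
  assumes "closed_walk D" "set D \<inter> S = {}"
    and "\<And>a b. grid_adj a b \<Longrightarrow> a \<notin> S \<Longrightarrow> b \<notin> S \<Longrightarrow>
      (crosses_ray p a b \<noteq> crosses_ray p' a b) = ((a \<in> X) \<noteq> (b \<in> X))"
  shows "winding_odd D p = winding_odd D p'"
  using odd_steps_crosses_ray_diff[of D S p p' X] assms
  unfolding closed_walk_def winding_odd_def by auto

lemma winding_odd_adjacent:
  assumes "closed_walk D" "grid_adj p p'" "p \<notin> set D" "p' \<notin> set D"
  shows "winding_odd D p = winding_odd D p'"
proof -
  have shift: "winding_odd D (c, s) = winding_odd D v"
    if "v \<in> {(c + 1, s), (c, s + 1), (c - 1, s + 1)}" "(c, s) \<notin> set D" "v \<notin> set D" for c s v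
  proof -
    from that(1) consider "v = (c + 1, s)" | "v = (c, s + 1)" | "v = (c - 1, s + 1)" by blast
    then show ?thesis
    proof cases
      case 1
      show ?thesis
        by (rule winding_odd_eq[OF assms(1), where S = "{v}" and X = "{}"])
          (use that 1 crosses_ray_shift_x in auto)
    next
      case 2
      show ?thesis
        by (rule winding_odd_eq[OF assms(1), where S = "{(c, s), v}"])
          (use that 2 crosses_ray_shift_y in auto)
    next
      case 3
      show ?thesis
        by (rule winding_odd_eq[OF assms(1), where S = "{(c, s), v}"])
          (use that 3 crosses_ray_shift_z in auto)
    qed
  qed
  obtain c s c' s' where p: "p = (c, s)" "p' = (c', s')" by fastforce
  with assms(2) have "p' \<in> {(c + 1, s), (c, s + 1), (c - 1, s + 1)} \<or>
    p \<in> {(c' + 1, s'), (c', s' + 1), (c' - 1, s' + 1)}"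
    by (auto simp: grid_adj_iff)
  then show ?thesis
    using shift[of p' c s] shift[of p c' s'] assms(3,4) p by auto
qed

lemma winding_odd_grid_reach:
  assumes "closed_walk D" "grid_reach (- set D) u v"
  shows "winding_odd D u = winding_odd D v"
  using assms(2) unfolding grid_reach_def
  by (induction rule: rtranclp_induct) (auto dest: winding_odd_adjacent[OF assms(1)])

lemma closed_walk_separates:
  assumes \<sigma>: "\<sigma> \<noteq> []" "successively grid_adj \<sigma>" "set \<sigma> \<inter> S = {}"
    and W: "W \<noteq> []" "successively grid_adj W" "hd W = last \<sigma>" "last W = hd \<sigma>"
    and W_no_crossing: "successively (\<lambda>a b. \<not> crosses_ray p a b \<and> \<not> crosses_ray p' a b) W"
    and boundary: "\<And>a b. grid_adj a b \<Longrightarrow> a \<notin> S \<Longrightarrow> b \<notin> S \<Longrightarrow>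
      (crosses_ray p a b \<noteq> crosses_ray p' a b) = ((a \<in> X) \<noteq> (b \<in> X))"
    and ends: "(hd \<sigma> \<in> X) \<noteq> (last \<sigma> \<in> X)"
  shows "\<not> grid_reach (- (set \<sigma> \<union> set W)) p p'"
proof
  assume reach: "grid_reach (- (set \<sigma> \<union> set W)) p p'"
  (* W crosses neither ray, and along sigma the two crossing parities differ by the parity of
     the number of times sigma crosses the boundary of X, which is odd. *)
  define D where "D = \<sigma> @ tl W"
  have "closed_walk D"
    using \<sigma> W by (simp add: closed_walk_def D_def successively_append_tl last_append_tl)
  moreover have "grid_reach (- set D) p p'"
    using reach by (rule grid_reach_mono) (use W(1) in \<open>auto simp: D_def dest: list.set_sel(2)\<close>)
  ultimately have "winding_odd D p = winding_odd D p'" by (rule winding_odd_grid_reach)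
  moreover have "\<not> odd_steps (crosses_ray p) W" "\<not> odd_steps (crosses_ray p') W"
    by (rule odd_steps_False, rule successively_mono[OF W_no_crossing], simp)+
  ultimately show False
    using odd_steps_crosses_ray_diff[OF \<sigma> boundary] ends
    unfolding winding_odd_def D_def odd_steps_append_tl[OF \<sigma>(1) W(3)] by auto
qed

definition row_walk :: "int \<Rightarrow> int \<Rightarrow> int \<Rightarrow> node list" where
  "row_walk r a b = map (\<lambda>y. (y, r)) [a..b]"

lemma row_walk_simps:
  assumes "a \<le> b"
  shows "row_walk r a b \<noteq> []" "hd (row_walk r a b) = (a, r)" "last (row_walk r a b) = (b, r)"
    "set (row_walk r a b) = {a..b} \<times> {r}"
  using assms by (auto simp: row_walk_def hd_map last_map hd_conv_nth last_conv_nth)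

lemma successively_row_walk:
  "successively (\<lambda>u v. grid_adj u v \<and> \<not> crosses_ray p u v \<and> \<not> crosses_ray p' u v) (row_walk r a b)"
  unfolding row_walk_def successively_map
  by (rule successively_mono[OF successively_upto]) (simp add: grid_adj_iff crosses_ray_rows)

section \<open>Portals separate their neighbours\<close>

lemma crosses_ray_gap:
  "grid_adj a b \<Longrightarrow> a \<notin> {(c - 1, r + 1), (c + 1, r), (c, r)} \<Longrightarrow>
   b \<notin> {(c - 1, r + 1), (c + 1, r), (c, r)} \<Longrightarrow>
   (crosses_ray (c - 1, r + 1) a b \<noteq> crosses_ray (c + 1, r) a b) =
   ((a \<in> {c..} \<times> {r + 1}) \<noteq> (b \<in> {c..} \<times> {r + 1}))"
  by (cases a; cases b; simp only: grid_adj_iff; elim disjE conjE; cases "snd a = r";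
    cases "snd a = r + 1"; cases "snd a = r - 1"; cases "snd a = r + 2"; auto)

lemma free_path_separates_gap:
  assumes \<sigma>: "\<sigma> \<noteq> []" "hd \<sigma> = (c, r + 1)" "last \<sigma> = (l - 1, r)" "successively grid_adj \<sigma>"
    "set \<sigma> \<inter> M = {}"
    and "l \<le> c" and M: "{(c - 1, r + 1), (c, r), (c + 1, r)} \<subseteq> M"
  shows "\<not> grid_reach (- (set \<sigma> \<union> {(l - 1, r), (c, r + 1)} \<union> {l..c} \<times> {r})) (c - 1, r + 1) (c + 1, r)"
proof -
  define W where "W = row_walk r (l - 1) c @ [(c, r + 1)]"
  have "{l - 1..c} = insert (l - 1) {l..c}" using \<open>l \<le> c\<close> by auto
  then have W: "W \<noteq> []" "hd W = (l - 1, r)" "last W = (c, r + 1)"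
    "set W = {(l - 1, r), (c, r + 1)} \<union> {l..c} \<times> {r}"
    using row_walk_simps[of "l - 1" c r] \<open>l \<le> c\<close> by (auto simp: W_def)
  have W_steps: "successively (\<lambda>u v. grid_adj u v \<and>
      \<not> crosses_ray (c - 1, r + 1) u v \<and> \<not> crosses_ray (c + 1, r) u v) W"
    using successively_row_walk[of "(c - 1, r + 1)" "(c + 1, r)" r "l - 1" c]
      row_walk_simps[of "l - 1" c r] \<open>l \<le> c\<close>
    by (simp add: W_def successively_append_iff grid_adj_iff)
  have "\<not> grid_reach (- (set \<sigma> \<union> set W)) (c - 1, r + 1) (c + 1, r)"
  proof (rule closed_walk_separates[where S = M and X = "{c..} \<times> {r + 1}"])
    show "successively grid_adj W"
      using W_steps by (rule successively_mono) simp
    show "successively (\<lambda>a b. \<not> crosses_ray (c - 1, r + 1) a b \<and> \<not> crosses_ray (c + 1, r) a b) W"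
      using W_steps by (rule successively_mono) simp
    show "(crosses_ray (c - 1, r + 1) a b \<noteq> crosses_ray (c + 1, r) a b) =
        ((a \<in> {c..} \<times> {r + 1}) \<noteq> (b \<in> {c..} \<times> {r + 1}))"
      if "grid_adj a b" "a \<notin> M" "b \<notin> M" for a b
      using that(1) by (rule crosses_ray_gap) (use that(2,3) M in auto)
  qed (use \<sigma> W in auto)
  then show ?thesis using W(4) by (simp add: Un_assoc)
qed

lemma gap_above_segment_separates:
  assumes conn: "induced_connected (- M)" and seg: "{l..h} \<times> {r} \<subseteq> M" and left: "(l - 1, r) \<notin> M"
    and c: "l \<le> c" "c < x" "x \<le> h" and gap: "(c, r + 1) \<notin> M"
    and M: "(c - 1, r + 1) \<in> M" "(x, r + 1) \<in> M"
  shows "\<not> grid_reach (M - {l..h} \<times> {r}) (c - 1, r + 1) (x, r + 1)"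
proof
  assume reach: "grid_reach (M - {l..h} \<times> {r}) (c - 1, r + 1) (x, r + 1)"
  obtain \<sigma> where \<sigma>: "\<sigma> \<noteq> []" "hd \<sigma> = (c, r + 1)" "last \<sigma> = (l - 1, r)"
    "successively grid_adj \<sigma>" "set \<sigma> \<subseteq> - M"
    using grid_reach_walk conn gap left unfolding induced_connected_iff by (metis ComplI)
  let ?S = "- (set \<sigma> \<union> {(l - 1, r), (c, r + 1)} \<union> {l..c} \<times> {r})"
  have "M - {l..h} \<times> {r} \<subseteq> ?S"
    using \<sigma>(5) gap left c by auto
  with reach have "grid_reach ?S (c - 1, r + 1) (x, r + 1)"
    by (rule grid_reach_mono)
  moreover have row: "{c + 1..x} \<times> {r} \<subseteq> ?S" and "(x, r + 1) \<in> ?S"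
  proof -
    have "{c + 1..x} \<times> {r} \<union> {(x, r + 1)} \<subseteq> M"
      using seg M(2) c by auto
    moreover have "({c + 1..x} \<times> {r} \<union> {(x, r + 1)}) \<inter> ({(l - 1, r), (c, r + 1)} \<union> {l..c} \<times> {r}) = {}"
      using c by auto
    ultimately show "{c + 1..x} \<times> {r} \<subseteq> ?S" "(x, r + 1) \<in> ?S"
      using \<sigma>(5) by blast+
  qed
  moreover have "(x, r) \<in> ?S" using c by (intro subsetD[OF row]) simp
  moreover have "grid_adj (x, r + 1) (x, r)" by (simp add: grid_adj_iff)
  ultimately have "grid_reach ?S (c - 1, r + 1) (x, r)"
    by (meson grid_reach_trans grid_reach_step)
  moreover have "min x (c + 1) = c + 1" "max x (c + 1) = x"
    using c by auto
  then have "grid_reach ?S (x, r) (c + 1, r)"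
    using row by (intro grid_reach_row) simp
  ultimately have "grid_reach ?S (c - 1, r + 1) (c + 1, r)"
    by (rule grid_reach_trans)
  moreover have "{(c - 1, r + 1), (c, r), (c + 1, r)} \<subseteq> M"
    using seg M(1) c by auto
  ultimately show False
    using free_path_separates_gap[OF \<sigma>(1-4) _ c(1)] \<sigma>(5) by blast
qed

lemma crosses_ray_across:
  "grid_adj a b \<Longrightarrow> a \<notin> insert (x, r + 1) (insert (x', r - 1) ({l..h} \<times> {r})) \<Longrightarrow>
   b \<notin> insert (x, r + 1) (insert (x', r - 1) ({l..h} \<times> {r})) \<Longrightarrow>
   l \<le> h \<Longrightarrow> l - 1 \<le> x \<Longrightarrow> x \<le> h \<Longrightarrow> l \<le> x' \<Longrightarrow> x' \<le> h + 1 \<Longrightarrow>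
   (crosses_ray (x, r + 1) a b \<noteq> crosses_ray (x', r - 1) a b) =
   ((a \<in> {x + 1..} \<times> {r + 1} \<union> {x'..} \<times> {r}) \<noteq> (b \<in> {x + 1..} \<times> {r + 1} \<union> {x'..} \<times> {r}))"
  by (cases a; cases b; simp only: grid_adj_iff; elim disjE conjE; cases "snd a = r";
    cases "snd a = r + 1"; cases "snd a = r - 1"; cases "snd a = r + 2"; auto)

lemma free_path_separates_rows:
  assumes \<sigma>: "\<sigma> \<noteq> []" "hd \<sigma> = (h + 1, r)" "last \<sigma> = (l - 1, r)" "successively grid_adj \<sigma>"
    "set \<sigma> \<inter> M = {}"
    and x: "l \<le> h" "l - 1 \<le> x" "x \<le> h" "l \<le> x'" "x' \<le> h + 1"
    and M: "{(x, r + 1), (x', r - 1)} \<union> {l..h} \<times> {r} \<subseteq> M"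
  shows "\<not> grid_reach (- (set \<sigma> \<union> {l - 1..h + 1} \<times> {r})) (x, r + 1) (x', r - 1)"
proof -
  define W where "W = row_walk r (l - 1) (h + 1)"
  have W: "W \<noteq> []" "hd W = (l - 1, r)" "last W = (h + 1, r)" "set W = {l - 1..h + 1} \<times> {r}"
    using row_walk_simps[of "l - 1" "h + 1" r] x(1) by (auto simp: W_def)
  have W_steps: "successively (\<lambda>u v. grid_adj u v \<and>
      \<not> crosses_ray (x, r + 1) u v \<and> \<not> crosses_ray (x', r - 1) u v) W"
    unfolding W_def by (rule successively_row_walk)
  let ?X = "{x + 1..} \<times> {r + 1} \<union> {x'..} \<times> {r}"
  have "\<not> grid_reach (- (set \<sigma> \<union> set W)) (x, r + 1) (x', r - 1)"
  proof (rule closed_walk_separates[where S = M and X = ?X])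
    show "successively grid_adj W"
      using W_steps by (rule successively_mono) simp
    show "successively (\<lambda>a b. \<not> crosses_ray (x, r + 1) a b \<and> \<not> crosses_ray (x', r - 1) a b) W"
      using W_steps by (rule successively_mono) simp
    show "(crosses_ray (x, r + 1) a b \<noteq> crosses_ray (x', r - 1) a b) = ((a \<in> ?X) \<noteq> (b \<in> ?X))"
      if "grid_adj a b" "a \<notin> M" "b \<notin> M" for a b
      using that(1) by (rule crosses_ray_across) (use that(2,3) M x in auto)
    show "(hd \<sigma> \<in> ?X) \<noteq> (last \<sigma> \<in> ?X)"
      using \<sigma>(2,3) x by auto
  qed (use \<sigma> W in auto)
  then show ?thesis using W(4) by simp
qed

lemma segment_separates_rows:
  assumes conn: "induced_connected (- M)" and seg: "{l..h} \<times> {r} \<subseteq> M"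
    and ends: "(l - 1, r) \<notin> M" "(h + 1, r) \<notin> M" and x: "l \<le> h" "l - 1 \<le> x" "x \<le> h" "l \<le> x'" "x' \<le> h + 1"
    and M: "(x, r + 1) \<in> M" "(x', r - 1) \<in> M"
  shows "\<not> grid_reach (M - {l..h} \<times> {r}) (x, r + 1) (x', r - 1)"
proof
  assume reach: "grid_reach (M - {l..h} \<times> {r}) (x, r + 1) (x', r - 1)"
  obtain \<sigma> where \<sigma>: "\<sigma> \<noteq> []" "hd \<sigma> = (h + 1, r)" "last \<sigma> = (l - 1, r)"
    "successively grid_adj \<sigma>" "set \<sigma> \<subseteq> - M"
    using grid_reach_walk conn ends unfolding induced_connected_iff by (metis ComplI)
  have "{l - 1..h + 1} = {l - 1, h + 1} \<union> {l..h}" using x(1) by auto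
  then have "M - {l..h} \<times> {r} \<subseteq> - (set \<sigma> \<union> {l - 1..h + 1} \<times> {r})"
    using \<sigma>(5) ends by auto
  with reach have "grid_reach (- (set \<sigma> \<union> {l - 1..h + 1} \<times> {r})) (x, r + 1) (x', r - 1)"
    by (rule grid_reach_mono)
  moreover have "set \<sigma> \<inter> M = {}" using \<sigma>(5) by blast
  moreover have "{(x, r + 1), (x', r - 1)} \<union> {l..h} \<times> {r} \<subseteq> M" using seg M by auto
  ultimately show False using free_path_separates_rows[OF \<sigma>(1-4)] x by blast
qed

definition portal_detour :: "axis \<Rightarrow> node set \<Rightarrow> node set \<Rightarrow> node \<Rightarrow> node \<Rightarrow> bool" where
  "portal_detour q M Z u v \<longleftrightarrow> is_portal q M Z \<and> u \<in> M - Z \<and> v \<in> M - Z \<and>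
     (\<exists>z\<in>Z. grid_adj u z) \<and> (\<exists>z\<in>Z. grid_adj v z) \<and> grid_reach (M - Z) u v"

lemma portal_detour_sym: "portal_detour q M Z u v \<Longrightarrow> portal_detour q M Z v u"
  unfolding portal_detour_def using grid_reach_sym by blast

lemma is_portal_AX_interval:
  assumes "finite M" "is_portal AX M Z"
  obtains l h r where "l \<le> h" "Z = {l..h} \<times> {r}" "(l - 1, r) \<notin> M" "(h + 1, r) \<notin> M"
proof -
  obtain a r where "(a, r) \<in> M" "Z = portal AX M (a, r)"
    using assms(2) unfolding is_portal_def by auto
  with portal_AX_interval[OF assms(1)] that show ?thesis by (metis order_trans)
qed

lemma segment_neighbour:
  assumes "grid_adj u z" "z \<in> {l..h} \<times> {r}" "u \<in> M" "u \<notin> {l..h} \<times> {r}"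
    and "(l - 1, r) \<notin> M" "(h + 1, r) \<notin> M"
  shows "(snd u = r + 1 \<and> l - 1 \<le> fst u \<and> fst u \<le> h) \<or> (snd u = r - 1 \<and> l \<le> fst u \<and> fst u \<le> h + 1)"
proof -
  have "u \<noteq> (l - 1, r)" "u \<noteq> (h + 1, r)" using assms(3,5,6) by auto
  with assms(1,2,4) show ?thesis
    by (cases u; cases z; simp only: grid_adj_iff; elim disjE conjE) auto
qed

lemma portal_detour_AX_above_le:
  assumes fin: "finite M" and conn: "induced_connected (- M)"
    and Z: "Z = {l..h} \<times> {r}" "(l - 1, r) \<notin> M" "(h + 1, r) \<notin> M"
    and detour: "portal_detour AX M Z (x, r + 1) (x', r + 1)" and "x \<le> x'"
  shows "portal AX M (x, r + 1) = portal AX M (x', r + 1)"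
proof (rule ccontr)
  assume ne: "portal AX M (x, r + 1) \<noteq> portal AX M (x', r + 1)"
  from detour have u: "(x, r + 1) \<in> M - Z" "\<exists>z\<in>Z. grid_adj (x, r + 1) z"
    and v: "(x', r + 1) \<in> M - Z" "\<exists>z\<in>Z. grid_adj (x', r + 1) z"
    and reach: "grid_reach (M - Z) (x, r + 1) (x', r + 1)" and "Z \<subseteq> M"
    unfolding portal_detour_def by (auto dest: is_portal_subset)
  have "l - 1 \<le> x" "x' \<le> h"
    using segment_neighbour[of _ _ l h r M] u v Z by fastforce+
  obtain l' h' where P: "l' \<le> x" "x \<le> h'" "portal AX M (x, r + 1) = {l'..h'} \<times> {r + 1}"
    "(h' + 1, r + 1) \<notin> M"
    using portal_AX_interval[OF fin] u by blast
  (* The free node (h' + 1, r + 1) right of the portal of (x, r + 1) is a gap between the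
     two neighbours. *)
  have "(x', r + 1) \<notin> portal AX M (x, r + 1)"
    using ne portal_eq by metis
  with P \<open>x \<le> x'\<close> v have gap: "h' + 1 < x'"
    by (cases "x' = h' + 1") auto
  have "grid_reach (portal AX M (x, r + 1)) (h', r + 1) (x, r + 1)"
    by (intro grid_reach_is_portal[where M = M and q = AX] is_portal_portal) (use u P in auto)
  moreover have "portal AX M (x, r + 1) \<subseteq> M - Z"
    using portal_subset[of AX M "(x, r + 1)"] P(3) Z(1) by auto
  ultimately have "grid_reach (M - Z) (h' + 1 - 1, r + 1) (x', r + 1)"
    using reach by (auto intro: grid_reach_trans grid_reach_mono)
  moreover have "\<not> grid_reach (M - Z) (h' + 1 - 1, r + 1) (x', r + 1)"
    unfolding Z(1)
  proof (rule gap_above_segment_separates[OF conn _ Z(2)])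
    show "{l..h} \<times> {r} \<subseteq> M" using \<open>Z \<subseteq> M\<close> Z(1) by simp
    show "(h' + 1 - 1, r + 1) \<in> M" using P u portal_subset by fastforce
  qed (use P gap v \<open>l - 1 \<le> x\<close> \<open>x' \<le> h\<close> in auto)
  ultimately show False by contradiction
qed

lemma induced_connected_image:
  assumes "\<And>u v. grid_adj (f u) (f v) \<longleftrightarrow> grid_adj u v" "induced_connected S"
  shows "induced_connected (f ` S)"
  using assms(2) unfolding induced_connected_iff by (auto intro: grid_reach_image[OF assms(1)])

lemma portal_detour_image:
  assumes inv: "\<And>v. f (f v) = v" and adj: "\<And>u v. grid_adj (f u) (f v) \<longleftrightarrow> grid_adj u v"
    and ax: "\<And>u v. axis_adj q' (f u) (f v) \<longleftrightarrow> axis_adj q u v"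
    and detour: "portal_detour q M Z u v"
  shows "portal_detour q' (f ` M) (f ` Z) (f u) (f v)"
proof -
  have inj: "inj f" using involuntory_imp_bij[OF inv] by (rule bij_is_inj)
  from detour obtain w where w: "w \<in> M" "Z = portal q M w"
    and uv: "u \<in> M - Z" "v \<in> M - Z" "\<exists>z\<in>Z. grid_adj u z" "\<exists>z\<in>Z. grid_adj v z"
    and reach: "grid_reach (M - Z) u v"
    unfolding portal_detour_def is_portal_def by blast
  have "is_portal q' (f ` M) (f ` Z)"
    unfolding w(2) portal_image[OF inv ax, symmetric] using w(1) by (intro is_portal_portal) simp
  moreover have "f u \<in> f ` M - f ` Z" "f v \<in> f ` M - f ` Z"
    using uv by (simp_all add: inj_image_mem_iff[OF inj])
  moreover have "\<exists>z\<in>f ` Z. grid_adj (f u) z" "\<exists>z\<in>f ` Z. grid_adj (f v) z"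
    using uv(3,4) by (auto simp: adj)
  moreover have "grid_reach (f ` M - f ` Z) (f u) (f v)"
    using grid_reach_image[OF adj reach] by (simp add: image_set_diff[OF inj])
  ultimately show ?thesis unfolding portal_detour_def by blast
qed

lemma same_portal_image:
  assumes inv: "\<And>v. f (f v) = v" and ax: "\<And>u v. axis_adj q' (f u) (f v) \<longleftrightarrow> axis_adj q u v"
    and "portal q' (f ` M) (f u) = portal q' (f ` M) (f v)"
  shows "portal q M u = portal q M v"
  using assms(3) involuntory_imp_bij[OF inv]
  by (simp add: portal_image[OF inv ax] bij_is_inj inj_image_eq_iff)

lemma compl_image_involution: "(\<And>v. f (f v) = v) \<Longrightarrow> - (f ` M) = f ` (- M)"
  by (simp add: bij_image_Compl_eq involuntory_imp_bij)

definition half_turn :: "node \<Rightarrow> node" where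
  "half_turn v = (- fst v, - snd v)"

lemma half_turn_half_turn: "half_turn (half_turn v) = v"
  by (simp add: half_turn_def)

lemma grid_adj_half_turn: "grid_adj (half_turn u) (half_turn v) \<longleftrightarrow> grid_adj u v"
  by (cases u; cases v) (auto simp: half_turn_def grid_adj_iff)

lemma axis_adj_half_turn: "axis_adj q (half_turn u) (half_turn v) \<longleftrightarrow> axis_adj q u v"
  by (cases q; cases u; cases v) (auto simp: half_turn_def abs_eq_1_iff)

lemma portal_detour_AX_above:
  assumes fin: "finite M" and conn: "induced_connected (- M)" and detour: "portal_detour AX M Z u v"
    and rows: "\<forall>z\<in>Z. snd u = snd z + 1" "\<forall>z\<in>Z. snd v = snd z + 1"
  shows "portal AX M u = portal AX M v"
proof -
  obtain l h r where Z: "l \<le> h" "Z = {l..h} \<times> {r}" "(l - 1, r) \<notin> M" "(h + 1, r) \<notin> M"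
    using is_portal_AX_interval[OF fin] detour unfolding portal_detour_def by blast
  have "(l, r) \<in> Z" using Z by simp
  with rows have "snd u = r + 1" "snd v = r + 1" by force+
  then have uv: "u = (fst u, r + 1)" "v = (fst v, r + 1)" by (metis prod.collapse)+
  consider "fst u \<le> fst v" | "fst v \<le> fst u" by linarith
  then show ?thesis
  proof cases
    case 1
    with detour uv show ?thesis
      by (metis portal_detour_AX_above_le[OF fin conn Z(2-4)])
  next
    case 2
    with portal_detour_sym[OF detour] uv show ?thesis
      by (metis portal_detour_AX_above_le[OF fin conn Z(2-4)])
  qed
qed

lemma portal_detour_AX_across:
  assumes conn: "induced_connected (- M)"
    and Z: "l \<le> h" "Z = {l..h} \<times> {r}" "(l - 1, r) \<notin> M" "(h + 1, r) \<notin> M"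
    and detour: "portal_detour AX M Z (x, r + 1) (x', r - 1)"
  shows False
proof -
  from detour have u: "(x, r + 1) \<in> M - Z" "\<exists>z\<in>Z. grid_adj (x, r + 1) z"
    and v: "(x', r - 1) \<in> M - Z" "\<exists>z\<in>Z. grid_adj (x', r - 1) z"
    and reach: "grid_reach (M - Z) (x, r + 1) (x', r - 1)" and "Z \<subseteq> M"
    unfolding portal_detour_def by (auto dest: is_portal_subset)
  have "l - 1 \<le> x" "x \<le> h" "l \<le> x'" "x' \<le> h + 1"
    using segment_neighbour[of _ _ l h r M] u v Z by fastforce+
  with segment_separates_rows[OF conn _ Z(3,4,1)] u(1) v(1) \<open>Z \<subseteq> M\<close> Z(2)
  have "\<not> grid_reach (M - Z) (x, r + 1) (x', r - 1)" by simp
  with reach show False by contradiction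
qed

lemma portal_detour_AX:
  assumes fin: "finite M" and conn: "induced_connected (- M)" and detour: "portal_detour AX M Z u v"
  shows "portal AX M u = portal AX M v"
proof -
  obtain l h r where Z: "l \<le> h" "Z = {l..h} \<times> {r}" "(l - 1, r) \<notin> M" "(h + 1, r) \<notin> M"
    using is_portal_AX_interval[OF fin] detour unfolding portal_detour_def by blast
  from detour have "u \<in> M - Z" "v \<in> M - Z" "\<exists>z\<in>Z. grid_adj u z" "\<exists>z\<in>Z. grid_adj v z"
    unfolding portal_detour_def by auto
  then have "snd u = r + 1 \<or> snd u = r - 1" "snd v = r + 1 \<or> snd v = r - 1"
    using segment_neighbour[of _ _ l h r M] Z by (metis DiffE)+
  then consider "snd u = r + 1" "snd v = r + 1" | "snd u = r - 1" "snd v = r - 1"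
    | "snd u = r + 1" "snd v = r - 1" | "snd u = r - 1" "snd v = r + 1" by blast
  then show ?thesis
  proof cases
    case 1
    with Z(2) show ?thesis by (intro portal_detour_AX_above[OF fin conn detour]) auto
  next
    case 2
    have "portal AX (half_turn ` M) (half_turn u) = portal AX (half_turn ` M) (half_turn v)"
    proof (rule portal_detour_AX_above)
      show "induced_connected (- half_turn ` M)"
        unfolding compl_image_involution[of half_turn, OF half_turn_half_turn]
        using grid_adj_half_turn conn by (rule induced_connected_image)
      show "portal_detour AX (half_turn ` M) (half_turn ` Z) (half_turn u) (half_turn v)"
        using half_turn_half_turn grid_adj_half_turn axis_adj_half_turn detour by (rule portal_detour_image)
    qed (use fin 2 Z(2) in \<open>auto simp: half_turn_def\<close>)
    then show ?thesis by (rule same_portal_image[OF half_turn_half_turn axis_adj_half_turn])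
  next
    case 3
    then obtain x x' where "u = (x, r + 1)" "v = (x', r - 1)" by (metis prod.collapse)
    with detour show ?thesis using portal_detour_AX_across[OF conn Z] by blast
  next
    case 4
    then obtain x x' where "v = (x, r + 1)" "u = (x', r - 1)" by (metis prod.collapse)
    with portal_detour_sym[OF detour] show ?thesis using portal_detour_AX_across[OF conn Z] by blast
  qed
qed

fun to_x_axis :: "axis \<Rightarrow> node \<Rightarrow> node" where
  "to_x_axis AX v = v"
| "to_x_axis AY v = (snd v, fst v)"
| "to_x_axis AZ v = (- fst v, fst v + snd v)"

lemma to_x_axis_to_x_axis: "to_x_axis q (to_x_axis q v) = v"
  by (cases q) auto

lemma grid_adj_to_x_axis: "grid_adj (to_x_axis q u) (to_x_axis q v) \<longleftrightarrow> grid_adj u v"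
  by (cases q; cases u; cases v) (auto simp: grid_adj_iff)

lemma axis_adj_to_x_axis: "axis_adj AX (to_x_axis q u) (to_x_axis q v) \<longleftrightarrow> axis_adj q u v"
  by (cases q; cases u; cases v) (auto simp: abs_eq_1_iff)

theorem portal_detour_same_portal:
  assumes fin: "finite M" and conn: "induced_connected (- M)" and detour: "portal_detour q M Z u v"
  shows "portal q M u = portal q M v"
  using to_x_axis_to_x_axis axis_adj_to_x_axis
proof (rule same_portal_image)
  show "portal AX (to_x_axis q ` M) (to_x_axis q u) = portal AX (to_x_axis q ` M) (to_x_axis q v)"
  proof (rule portal_detour_AX)
    show "induced_connected (- to_x_axis q ` M)"
      unfolding compl_image_involution[of "to_x_axis q", OF to_x_axis_to_x_axis]
      using grid_adj_to_x_axis conn by (rule induced_connected_image)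
    show "portal_detour AX (to_x_axis q ` M) (to_x_axis q ` Z) (to_x_axis q u) (to_x_axis q v)"
      using to_x_axis_to_x_axis grid_adj_to_x_axis axis_adj_to_x_axis detour by (rule portal_detour_image)
  qed (use fin in simp)
qed

section \<open>The portal graph\<close>

lemma portal_adj_sym: "portal_adj q M X Y \<Longrightarrow> portal_adj q M Y X"
  unfolding portal_adj_def using grid_adj_sym by blast

lemma relpowp_sym:
  assumes "symp R" "(R ^^ n) a b"
  shows "(R ^^ n) b a"
  using assms(2)
proof (induction n arbitrary: a b)
  case (Suc n)
  from Suc.prems obtain y where "(R ^^ n) a y" "R y b" by (rule relpowp_Suc_E)
  with Suc.IH assms(1) show ?case by (meson relpowp_Suc_I2 sympD)
qed simp

lemma relpowp_walk_through:
  assumes "(R ^^ m) a b" "(R ^^ n) b c"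
  obtains h where "h 0 = a" "h m = b" "h (m + n) = c" "\<forall>i<m + n. R (h i) (h (Suc i))"
proof -
  obtain f where f: "f 0 = a" "f m = b" "\<forall>i<m. R (f i) (f (Suc i))"
    using assms(1) unfolding relpowp_fun_conv by blast
  obtain g where g: "g 0 = b" "g n = c" "\<forall>i<n. R (g i) (g (Suc i))"
    using assms(2) unfolding relpowp_fun_conv by blast
  define h where "h i = (if i \<le> m then f i else g (i - m))" for i
  have steps: "\<forall>i<m + n. R (h i) (h (Suc i))"
  proof (intro allI impI)
    fix i assume "i < m + n"
    show "R (h i) (h (Suc i))"
    proof (cases "i < m")
      case True
      then show ?thesis using f(3) by (simp add: h_def)
    next
      case False
      then have "i - m < n" "Suc i - m = Suc (i - m)" using \<open>i < m + n\<close> by auto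
      then show ?thesis using False f(2) g(1,3) by (auto simp: h_def)
    qed
  qed
  show ?thesis
    by (rule that[OF _ _ _ steps]) (use f(1,2) g(1,2) in \<open>auto simp: h_def\<close>)
qed

definition portal_dist :: "axis \<Rightarrow> node set \<Rightarrow> node set \<Rightarrow> node set \<Rightarrow> nat" where
  "portal_dist q M X Y = (LEAST n. (portal_adj q M ^^ n) X Y)"

lemma qdist_eq_portal_dist: "qdist q M u v = portal_dist q M (portal q M u) (portal q M v)"
  unfolding qdist_def portal_dist_def ..

lemma portal_dist_walk: "(portal_adj q M ^^ n) X Y \<Longrightarrow> (portal_adj q M ^^ portal_dist q M X Y) X Y"
  unfolding portal_dist_def by (rule LeastI)

lemma portal_dist_le: "(portal_adj q M ^^ n) X Y \<Longrightarrow> portal_dist q M X Y \<le> n"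
  unfolding portal_dist_def by (rule Least_le)

lemma portal_dist_sym:
  assumes "(portal_adj q M ^^ n) X Y"
  shows "portal_dist q M X Y = portal_dist q M Y X"
proof -
  have sym: "symp (portal_adj q M)" unfolding symp_def using portal_adj_sym by blast
  have "(portal_adj q M ^^ portal_dist q M X Y) Y X"
    by (rule relpowp_sym[OF sym portal_dist_walk[OF assms]])
  moreover from this have "(portal_adj q M ^^ portal_dist q M Y X) X Y"
    by (rule relpowp_sym[OF sym portal_dist_walk])
  ultimately show ?thesis by (meson antisym portal_dist_le)
qed

definition portal_geodesic :: "axis \<Rightarrow> node set \<Rightarrow> (nat \<Rightarrow> node set) \<Rightarrow> nat \<Rightarrow> bool" where
  "portal_geodesic q M f d \<longleftrightarrow>
     (\<forall>i<d. portal_adj q M (f i) (f (Suc i))) \<and> portal_dist q M (f 0) (f d) = d"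

lemma portal_geodesic_exists:
  assumes "(portal_adj q M ^^ n) X Y"
  obtains f where "f 0 = X" "f (portal_dist q M X Y) = Y" "portal_geodesic q M f (portal_dist q M X Y)"
  using portal_dist_walk[OF assms] unfolding relpowp_fun_conv portal_geodesic_def by auto

lemma portal_geodesic_dist:
  assumes "portal_geodesic q M f d" "i \<le> d"
  shows "portal_dist q M (f 0) (f i) = i" "portal_dist q M (f i) (f d) = d - i"
proof -
  have steps: "\<forall>i<d. portal_adj q M (f i) (f (Suc i))" "portal_dist q M (f 0) (f d) = d"
    using assms(1) unfolding portal_geodesic_def by auto
  have w1: "(portal_adj q M ^^ i) (f 0) (f i)"
    unfolding relpowp_fun_conv using steps assms(2) by (intro exI[of _ f]) auto
  have w2: "(portal_adj q M ^^ (d - i)) (f i) (f d)"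
    unfolding relpowp_fun_conv using steps assms(2) by (intro exI[of _ "\<lambda>j. f (i + j)"]) auto
  have "(portal_adj q M ^^ (portal_dist q M (f 0) (f i) + portal_dist q M (f i) (f d))) (f 0) (f d)"
    using portal_dist_walk[OF w1] portal_dist_walk[OF w2] by (rule relpowp_trans)
  then have "d \<le> portal_dist q M (f 0) (f i) + portal_dist q M (f i) (f d)"
    using steps(2) portal_dist_le by metis
  then show "portal_dist q M (f 0) (f i) = i" "portal_dist q M (f i) (f d) = d - i"
    using portal_dist_le[OF w1] portal_dist_le[OF w2] assms(2) by linarith+
qed

lemma portal_geodesic_inj:
  "portal_geodesic q M f d \<Longrightarrow> i \<le> d \<Longrightarrow> j \<le> d \<Longrightarrow> f i = f j \<Longrightarrow> i = j"
  by (metis portal_geodesic_dist(1))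

definition portal_adj_avoiding :: "axis \<Rightarrow> node set \<Rightarrow> node set \<Rightarrow> node set \<Rightarrow> node set \<Rightarrow> bool" where
  "portal_adj_avoiding q M Z X Y \<longleftrightarrow> portal_adj q M X Y \<and> X \<noteq> Z \<and> Y \<noteq> Z"

lemma symp_portal_adj_avoiding: "symp (portal_adj_avoiding q M Z)"
  unfolding portal_adj_avoiding_def symp_def using portal_adj_sym by blast

lemma grid_reach_imp_avoiding_walk:
  assumes "grid_reach (M - Z) u v"
  shows "(portal_adj_avoiding q M Z)\<^sup>*\<^sup>* (portal q M u) (portal q M v)"
  using assms unfolding grid_reach_def
proof (induction rule: rtranclp_induct)
  case (step y z)
  then have yz: "y \<in> M - Z" "z \<in> M - Z" "grid_adj y z" by auto
  have "portal q M y = portal q M z \<or> portal_adj_avoiding q M Z (portal q M y) (portal q M z)"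
    using yz portal_self[of _ M q] is_portal_portal[of _ M q]
    unfolding portal_adj_avoiding_def portal_adj_def by blast
  with step.IH show ?case by (metis rtranclp.rtrancl_into_rtrancl)
qed simp

lemma avoiding_walk_imp_grid_reach:
  assumes "(portal_adj_avoiding q M Z)\<^sup>*\<^sup>* X Y" and X: "is_portal q M X" "X \<noteq> Z"
    and Z: "is_portal q M Z" and "x \<in> X" "y \<in> Y"
  shows "grid_reach (M - Z) x y"
  using assms(1,6)
proof (induction arbitrary: y rule: rtranclp_induct)
  case base
  have "X \<subseteq> M - Z" using X Z is_portal_subset is_portal_disjoint by blast
  with grid_reach_is_portal[OF X(1) \<open>x \<in> X\<close> base] show ?case by (rule grid_reach_mono)
next
  case (step Y Y')
  then obtain a b where ab: "a \<in> Y" "b \<in> Y'" "grid_adj a b" "is_portal q M Y" "is_portal q M Y'"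
    "Y \<noteq> Z" "Y' \<noteq> Z"
    unfolding portal_adj_avoiding_def portal_adj_def by blast
  then have sub: "Y \<subseteq> M - Z" "Y' \<subseteq> M - Z" using Z is_portal_subset is_portal_disjoint by blast+
  have "grid_reach (M - Z) x a" by (rule step.IH[OF ab(1)])
  moreover have "grid_reach (M - Z) a b" using ab sub by (intro grid_reach_step) auto
  moreover have "grid_reach (M - Z) b y"
    using grid_reach_is_portal[OF ab(5,2) step.prems] sub(2) by (rule grid_reach_mono)
  ultimately show ?case by (meson grid_reach_trans)
qed

lemma portal_walk_exists:
  assumes "induced_connected M" "u \<in> M" "v \<in> M"
  shows "\<exists>n. (portal_adj q M ^^ n) (portal q M u) (portal q M v)"
proof -
  have "grid_reach (M - {}) u v" using assms unfolding induced_connected_iff by simp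
  then have "(portal_adj_avoiding q M {})\<^sup>*\<^sup>* (portal q M u) (portal q M v)"
    by (rule grid_reach_imp_avoiding_walk)
  then have "(portal_adj q M)\<^sup>*\<^sup>* (portal q M u) (portal q M v)"
    by (rule rtranclp_mono[THEN predicate2D, rotated]) (auto simp: portal_adj_avoiding_def)
  then show ?thesis by (simp add: rtranclp_power)
qed

lemma portal_neighbours_separated:
  assumes simple: "simple_tri_grid_graph M"
    and ZX: "portal_adj q M Z X" and ZY: "portal_adj q M Z Y"
    and walk: "(portal_adj_avoiding q M Z)\<^sup>*\<^sup>* X Y"
  shows "X = Y"
proof -
  obtain a u where a: "a \<in> Z" "u \<in> X" "grid_adj a u" using ZX unfolding portal_adj_def by blast
  obtain b v where b: "b \<in> Z" "v \<in> Y" "grid_adj b v" using ZY unfolding portal_adj_def by blast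
  have portals: "is_portal q M Z" "is_portal q M X" "is_portal q M Y" "X \<noteq> Z" "Y \<noteq> Z"
    using ZX ZY unfolding portal_adj_def by auto
  have "portal_detour q M Z u v"
    unfolding portal_detour_def
  proof (intro conjI)
    show "u \<in> M - Z" "v \<in> M - Z"
      using a(2) b(2) portals is_portal_subset is_portal_disjoint by blast+
    show "\<exists>z\<in>Z. grid_adj u z" "\<exists>z\<in>Z. grid_adj v z"
      using a b grid_adj_sym by blast+
    show "grid_reach (M - Z) u v"
      using walk portals(2,4,1) a(2) b(2) by (rule avoiding_walk_imp_grid_reach)
  qed (fact portals(1))
  moreover have "finite M" "induced_connected (- M)"
    using simple unfolding simple_tri_grid_graph_def tri_grid_graph_def by auto
  ultimately have "portal q M u = portal q M v"
    using portal_detour_same_portal by blast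
  then show ?thesis using is_portal_eq portals(2,3) a(2) b(2) by metis
qed

lemma walk_avoiding_segment:
  assumes "\<forall>i<d. portal_adj q M (f i) (f (Suc i))" "j \<le> k" "k \<le> d"
    and "\<forall>t. j \<le> t \<and> t \<le> k \<longrightarrow> f t \<noteq> Z"
  shows "(portal_adj_avoiding q M Z)\<^sup>*\<^sup>* (f j) (f k)"
  using assms(2-4)
proof (induction k rule: dec_induct)
  case (step n)
  then have "portal_adj_avoiding q M Z (f n) (f (Suc n))"
    using assms(1) unfolding portal_adj_avoiding_def by auto
  with step show ?case by (simp add: rtranclp.rtrancl_into_rtrancl)
qed simp

lemma portal_geodesic_inner_separates:
  assumes simple: "simple_tri_grid_graph M" and geo: "portal_geodesic q M f d" and i: "0 < i" "i < d"
  shows "\<not> (portal_adj_avoiding q M (f i))\<^sup>*\<^sup>* (f 0) (f d)"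
proof
  assume walk: "(portal_adj_avoiding q M (f i))\<^sup>*\<^sup>* (f 0) (f d)"
  have steps: "\<forall>j<d. portal_adj q M (f j) (f (Suc j))"
    using geo unfolding portal_geodesic_def by simp
  have other: "\<forall>t. j \<le> t \<and> t \<le> k \<longrightarrow> f t \<noteq> f i" if "k \<le> d" "i < j \<or> k < i" for j k
  proof (intro allI impI)
    fix t assume "j \<le> t \<and> t \<le> k"
    with that have "t \<le> d" "t \<noteq> i" by auto
    then show "f t \<noteq> f i" using portal_geodesic_inj[OF geo, of t i] i by auto
  qed
  have sym: "symp (portal_adj_avoiding q M (f i))\<^sup>*\<^sup>*"
    by (rule symp_rtranclp[OF symp_portal_adj_avoiding])
  have "(portal_adj_avoiding q M (f i))\<^sup>*\<^sup>* (f (i - 1)) (f 0)"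
    using walk_avoiding_segment[OF steps _ _ other, of 0 "i - 1"] i by (auto intro: sympD[OF sym])
  also note walk
  also have "(portal_adj_avoiding q M (f i))\<^sup>*\<^sup>* (f d) (f (Suc i))"
    using walk_avoiding_segment[OF steps _ _ other, of "Suc i" d] i by (auto intro: sympD[OF sym])
  finally have "f (i - 1) = f (Suc i)"
  proof (rule portal_neighbours_separated[OF simple, rotated 2])
    show "portal_adj q M (f i) (f (i - 1))" "portal_adj q M (f i) (f (Suc i))"
      using steps[rule_format, of "i - 1"] steps[rule_format, of i] i by (auto intro: portal_adj_sym)
  qed
  moreover have "i - 1 \<le> d" "Suc i \<le> d" using i by auto
  ultimately have "i - 1 = Suc i" using portal_geodesic_inj[OF geo] by blast
  then show False by simp
qed

lemma portal_geodesic_through: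
  assumes simple: "simple_tri_grid_graph M" and geo: "portal_geodesic q M f d" and "m \<le> d"
    and "(portal_adj q M ^^ m) (f 0) V" "(portal_adj q M ^^ (d - m)) V (f d)"
  shows "V = f m"
proof -
  obtain h where h: "h 0 = f 0" "h m = V" "h d = f d" "\<forall>i<d. portal_adj q M (h i) (h (Suc i))"
    using relpowp_walk_through[OF assms(4,5)] \<open>m \<le> d\<close> by (metis le_add_diff_inverse)
  have geo_h: "portal_geodesic q M h d"
    using geo h unfolding portal_geodesic_def by simp
  obtain j where j: "j \<le> d" "h j = f m"
  proof (cases "0 < m \<and> m < d")
    case True
    show ?thesis
    proof (rule ccontr)
      assume "\<not> ?thesis"
      with that have "\<forall>t. 0 \<le> t \<and> t \<le> d \<longrightarrow> h t \<noteq> f m" by blast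
      from walk_avoiding_segment[OF h(4) _ order_refl this] h(1,3)
      have "(portal_adj_avoiding q M (f m))\<^sup>*\<^sup>* (f 0) (f d)" by simp
      with portal_geodesic_inner_separates[OF simple geo] True show False by blast
    qed
  next
    case False
    with \<open>m \<le> d\<close> h(1,3) that show ?thesis by (metis le0 le_neq_implies_less order_refl)
  qed
  have "j = m"
    using portal_geodesic_dist(1)[OF geo_h j(1)] portal_geodesic_dist(1)[OF geo \<open>m \<le> d\<close>] j(2) h(1)
    by simp
  with j(2) h(2) show ?thesis by simp
qed

lemma portal_geodesic_is_portal:
  assumes "portal_geodesic q M f d" "is_portal q M (f 0)" "i \<le> d"
  shows "is_portal q M (f i)"
proof (cases i)
  case (Suc j)
  with assms have "portal_adj q M (f j) (f i)" unfolding portal_geodesic_def by auto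
  then show ?thesis unfolding portal_adj_def by blast
qed (use assms in simp)

lemma portal_geodesic_middle_iff:
  assumes simple: "simple_tri_grid_graph M" and geo: "portal_geodesic q M f d"
    and ends: "f 0 = portal q M g" "f d = portal q M g'" "g \<in> M" "g' \<in> M"
    and "m \<le> d" "v \<in> M"
  shows "qdist q M g v = m \<and> qdist q M g' v = d - m \<longleftrightarrow> v \<in> f m"
proof -
  have walk: "\<exists>n. (portal_adj q M ^^ n) (portal q M a) (portal q M b)" if "a \<in> M" "b \<in> M" for a b
    using portal_walk_exists simple that unfolding simple_tri_grid_graph_def tri_grid_graph_def by blast
  have dist_sym: "qdist q M g' v = portal_dist q M (portal q M v) (f d)"
    unfolding qdist_eq_portal_dist ends(2) using walk[OF ends(4) \<open>v \<in> M\<close>] portal_dist_sym by blast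
  show ?thesis
  proof
    assume "qdist q M g v = m \<and> qdist q M g' v = d - m"
    then have "(portal_adj q M ^^ m) (f 0) (portal q M v)"
      "(portal_adj q M ^^ (d - m)) (portal q M v) (f d)"
      using portal_dist_walk walk[OF ends(3) \<open>v \<in> M\<close>] walk[OF \<open>v \<in> M\<close> ends(4)] dist_sym ends(1,2)
      unfolding qdist_eq_portal_dist by metis+
    then have "portal q M v = f m" by (rule portal_geodesic_through[OF simple geo \<open>m \<le> d\<close>])
    then show "v \<in> f m" using portal_self[OF \<open>v \<in> M\<close>, of q] by simp
  next
    assume "v \<in> f m"
    moreover have "is_portal q M (f m)"
      using portal_geodesic_is_portal[OF geo _ \<open>m \<le> d\<close>] ends(1,3) is_portal_portal by metis
    ultimately have "portal q M v = f m" by (rule is_portal_eq[rotated])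
    then show "qdist q M g v = m \<and> qdist q M g' v = d - m"
      using portal_geodesic_dist[OF geo \<open>m \<le> d\<close>] dist_sym ends(1)
      unfolding qdist_eq_portal_dist by simp
  qed
qed

lemma grid_path_meets_geodesic:
  assumes simple: "simple_tri_grid_graph M" and geo: "portal_geodesic q M f d"
    and ends: "f 0 = portal q M g" "f d = portal q M g'" "g \<in> M" "g' \<in> M"
    and "m \<le> d" and path: "grid_path M g g' p"
  shows "\<exists>v\<in>set p. v \<in> f m"
proof (rule ccontr)
  assume avoid: "\<not> (\<exists>v\<in>set p. v \<in> f m)"
  with path have "successively grid_adj p" "set p \<subseteq> M - f m" "p \<noteq> []" "hd p = g" "last p = g'"
    unfolding grid_path_def successively_conv_nth by auto
  then have "grid_reach (M - f m) g g'" using walk_grid_reach by metis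
  then have walk: "(portal_adj_avoiding q M (f m))\<^sup>*\<^sup>* (f 0) (f d)"
    unfolding ends(1,2) by (rule grid_reach_imp_avoiding_walk)
  have "g \<in> set p" "g' \<in> set p"
    using path unfolding grid_path_def by (auto intro: hd_in_set last_in_set)
  moreover have "g \<in> f 0" "g' \<in> f d"
    using portal_self[OF ends(3), of q] portal_self[OF ends(4), of q] ends(1,2) by simp_all
  ultimately have "f m \<noteq> f 0" "f m \<noteq> f d"
    using avoid by auto
  then have "m \<noteq> 0" "m \<noteq> d" by auto
  with portal_geodesic_inner_separates[OF simple geo] walk \<open>m \<le> d\<close> show False by simp
qed

theorem mainTheorem3:
  fixes M :: "node set" and g g' :: node and q :: axis
  assumes "simple_tri_grid_graph M" and "g \<in> M" and "g' \<in> M"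
  defines "d \<equiv> qdist q M g g'"
  defines "P \<equiv> {v \<in> M. qdist q M g v = (d + 1) div 2 \<and> qdist q M g' v = d div 2}"
  shows "is_portal q M P \<and> (\<forall>p. grid_path M g g' p \<longrightarrow> (\<exists>v\<in>set p. v \<in> P))"
proof -
  obtain n where "(portal_adj q M ^^ n) (portal q M g) (portal q M g')"
    using portal_walk_exists assms(1-3) unfolding simple_tri_grid_graph_def tri_grid_graph_def by blast
  then obtain f where f: "f 0 = portal q M g" "f d = portal q M g'" "portal_geodesic q M f d"
    unfolding d_def qdist_eq_portal_dist by (rule portal_geodesic_exists)
  define m where "m = (d + 1) div 2"
  have m: "m \<le> d" "d div 2 = d - m" unfolding m_def by auto
  have "is_portal q M (f m)"
    using portal_geodesic_is_portal[OF f(3) _ m(1)] f(1) assms(2) is_portal_portal by metis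
  moreover have "P = f m"
    using portal_geodesic_middle_iff[OF assms(1) f(3) f(1,2) assms(2,3) m(1)] is_portal_subset[OF calculation]
    unfolding P_def m_def[symmetric] m(2) by blast
  moreover have "\<forall>p. grid_path M g g' p \<longrightarrow> (\<exists>v\<in>set p. v \<in> f m)"
    using grid_path_meets_geodesic[OF assms(1) f(3) f(1,2) assms(2,3) m(1)] by blast
  ultimately show ?thesis by simp
qed

end
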